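(* Let $w$ be a positive integer, let $\lambda_0<\lambda_1<\cdots<\lambda_w$ be real numbers with $\lambda_w=\lambda_0+1$, and let $b_0,b_1,\ldots,b_{w-1}$ be integers such that $b_{k-1}\neq b_k$ for $k=1,\ldots,w-1$ and $1+b_{w-1}\neq b_0$. Let \[K'=\bigcup_{k=0}^{w-1}[b_k+\lambda_k,\, b_k+\lambda_{k+1}].\] Then $K'$ is an $\mathcal{N}$-set, and \[(K'-K')\cap\mathbb{N}=\{|b_k-b_{k-1}| : k=1,\ldots,w-1\}\cup\{|1+b_{w-1}-b_0|\},\] which is a finite set of relatively prime positive integers.
   Context: $\mathbb{N}$ denotes the set of positive integers. $K-K=\{x-y : x,y\in K\}$. A set of integers is relatively prime if it is nonempty and its elements have no common factor greater than $1$. An $\mathcal{N}$-set in $\mathbb{R}^n$ is a compact set $K\subseteq\mathbb{R}^n$ such that for every $x\in\mathbb{R}^n$ there exists $y\in K$ with $x-y\in\mathbb{Z}^n$. *)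

theory Defs
  imports "HOL-Analysis.Analysis"
begin

definition diff_set :: "'a::ab_group_add set \<Rightarrow> 'a set" where
  "diff_set K = {x - y | x y. x \<in> K \<and> y \<in> K}"

text \<open>N-set in R^n (here R^n is any Euclidean space, Z^n = points with integer
  coordinates w.r.t. the standard basis).\<close>
definition N_set :: "'a::euclidean_space set \<Rightarrow> bool" where
  "N_set K \<longleftrightarrow> compact K \<and>
     (\<forall>x. \<exists>y\<in>K. \<forall>i\<in>Basis. (x - y) \<bullet> i \<in> \<int>)"

definition rel_prime_set :: "int set \<Rightarrow> bool" where
  "rel_prime_set S \<longleftrightarrow> S \<noteq> {} \<and> (\<forall>d::int. d > 1 \<longrightarrow> \<not> (\<forall>s\<in>S. d dvd s))"

end

theory Submission
  imports Defs
begin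

(* Reducing a real number modulo 1 into [lam 0, lam w) and
   locating the piece containing it shows that K is an N-set.  If two points of
   K, taken from pieces k and j, differ by a positive integer n, then after
   removing the shifts b k, b j the remaining points of [lam 0, lam w] differ
   by an integer of absolute value at most one; either they coincide (so the
   pieces are equal or adjacent and n = |b k - b (k-1)|), or they are the two
   endpoints lam w and lam 0 (so n = |1 + b (w-1) - b 0|).  Conversely each of
   these jumps is realised by such a pair of points.  Finally the jumps are
   relatively prime because the consecutive differences telescope to
   b (w-1) - b 0, which together with 1 + b (w-1) - b 0 generates 1. *)

definition staircase :: "nat \<Rightarrow> (nat \<Rightarrow> real) \<Rightarrow> (nat \<Rightarrow> int) \<Rightarrow> real set" where
  "staircase w lam b = (\<Union>k<w. {real_of_int (b k) + lam k .. real_of_int (b k) + lam (k + 1)})"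

definition jumps :: "nat \<Rightarrow> (nat \<Rightarrow> int) \<Rightarrow> int set" where
  "jumps w b = {\<bar>b k - b (k - 1)\<bar> | k. k \<in> {1..<w}} \<union> {\<bar>1 + b (w - 1) - b 0\<bar>}"

lemma mem_staircase:
  "x \<in> staircase w lam b \<longleftrightarrow>
     (\<exists>k<w. real_of_int (b k) + lam k \<le> x \<and> x \<le> real_of_int (b k) + lam (k + 1))"
  by (auto simp: staircase_def)

lemma abs_mem_diff_set:
  fixes x :: "'a::linordered_idom"
  assumes "x \<in> diff_set K"
  shows "\<bar>x\<bar> \<in> diff_set K"
proof -
  obtain u v where "u \<in> K" "v \<in> K" "x = u - v"
    using assms by (auto simp: diff_set_def)
  then have "- x \<in> diff_set K"
    unfolding diff_set_def by force
  with assms show ?thesis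
    by (cases "x \<ge> 0") auto
qed

locale unit_partition =
  fixes w :: nat and lam :: "nat \<Rightarrow> real"
  assumes w_pos: "w > 0"
    and lam_step: "\<forall>k<w. lam k < lam (k + 1)"
    and lam_period: "lam w = lam 0 + 1"
begin

lemma lam_less:
  assumes "i < j" "j \<le> w"
  shows "lam i < lam j"
  using assms
proof (induction j)
  case 0
  then show ?case by simp
next
  case (Suc j)
  have "lam j < lam (Suc j)"
    using lam_step Suc.prems by simp
  with Suc show ?case
    by (cases "i = j") auto
qed

lemma lam_le:
  assumes "i \<le> j" "j \<le> w"
  shows "lam i \<le> lam j"
  using lam_less[of i j] assms by (cases "i = j") auto

lemma lam_inj:
  assumes "i \<le> w" "j \<le> w" "lam i = lam j"
  shows "i = j"
  using lam_less[of i j] lam_less[of j i] assms by (metis less_irrefl nat_neq_iff)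

lemma pieces_cover:
  assumes "lam 0 \<le> t" "t \<le> lam w"
  obtains k where "k < w" "lam k \<le> t" "t \<le> lam (k + 1)"
proof -
  define S where "S = {k. k < w \<and> lam k \<le> t}"
  have "0 \<in> S" "finite S"
    using w_pos assms(1) by (auto simp: S_def)
  define k where "k = Max S"
  have "k \<in> S"
    using \<open>0 \<in> S\<close> \<open>finite S\<close> unfolding k_def by (auto intro: Max_in)
  have k_max: "\<And>j. j \<in> S \<Longrightarrow> j \<le> k"
    using \<open>finite S\<close> by (simp add: k_def)
  from \<open>k \<in> S\<close> have "k < w" "lam k \<le> t"
    by (auto simp: S_def)
  moreover have "t \<le> lam (k + 1)"
  proof (cases "k + 1 = w")
    case True
    then show ?thesis using assms(2) by simp
  next
    case False
    then have "k + 1 < w" "k + 1 \<notin> S"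
      using \<open>k < w\<close> k_max by fastforce+
    then show ?thesis by (simp add: S_def)
  qed
  ultimately show ?thesis using that by blast
qed

lemma pieces_overlap:
  assumes "k < w" "j < w" "lam k \<le> t" "t \<le> lam (k + 1)" "lam j \<le> t" "t \<le> lam (j + 1)"
  shows "k = j \<or> j = k + 1 \<or> k = j + 1"
proof -
  have "\<not> k + 1 < j" "\<not> j + 1 < k"
    using lam_less[of "k + 1" j] lam_less[of "j + 1" k] assms by linarith+
  then show ?thesis by linarith
qed

lemma pieces_unit_shift:
  assumes "k < w" "j < w" "lam k \<le> s" "s \<le> lam (k + 1)" "lam j \<le> t" "t \<le> lam (j + 1)"
    and "s = t + 1"
  shows "k + 1 = w \<and> j = 0"
proof -
  have "lam (k + 1) \<le> lam w" "lam 0 \<le> lam j"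
    using lam_le assms(1,2) by auto
  then have "lam (k + 1) = lam w" "lam j = lam 0"
    using assms(3-7) lam_period by linarith+
  then show ?thesis
    using lam_inj assms(1,2) by auto
qed

lemma pieces_int_shift_bound:
  assumes "k < w" "j < w" "lam k \<le> s" "s \<le> lam (k + 1)" "lam j \<le> t" "t \<le> lam (j + 1)"
    and "s - t = real_of_int m"
  shows "m = 0 \<or> m = 1 \<or> m = -1"
proof -
  have "lam 0 \<le> lam k" "lam (k + 1) \<le> lam w" "lam 0 \<le> lam j" "lam (j + 1) \<le> lam w"
    using lam_le assms(1,2) by auto
  then have "real_of_int m \<le> 1" "real_of_int m \<ge> -1"
    using assms(3-7) lam_period by linarith+
  then show ?thesis by linarith
qed

(* Every real number is congruent mod 1 to a point of the staircase: reduce it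
   into [lam 0, lam w) and shift by b k for the piece k containing it. *)
theorem staircase_N_set: "N_set (staircase w lam b)"
proof -
  have "compact (staircase w lam b)"
    unfolding staircase_def by (rule compact_UN) auto
  moreover have "\<exists>y\<in>staircase w lam b. x - y \<in> \<int>" for x :: real
  proof -
    define t where "t = x - of_int \<lfloor>x - lam 0\<rfloor>"
    have "lam 0 \<le> t" "t \<le> lam w"
      unfolding t_def lam_period by linarith+
    then obtain k where "k < w" "lam k \<le> t" "t \<le> lam (k + 1)"
      by (rule pieces_cover)
    then have "real_of_int (b k) + t \<in> staircase w lam b"
      by (auto simp: mem_staircase)
    moreover have "x - (real_of_int (b k) + t) \<in> \<int>"
      unfolding t_def by simp
    ultimately show ?thesis by blast
  qed
  ultimately show ?thesis
    by (simp add: N_set_def Basis_real_def)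
qed

lemma staircase_int_diffs:
  assumes "n > 0" "real_of_int n \<in> diff_set (staircase w lam b)"
  shows "n \<in> jumps w b"
proof -
  obtain x y where xy: "x \<in> staircase w lam b" "y \<in> staircase w lam b" "real_of_int n = x - y"
    using assms(2) by (auto simp: diff_set_def)
  obtain k where k: "k < w" "lam k \<le> x - b k" "x - b k \<le> lam (k + 1)"
    using xy(1) by (force simp: mem_staircase)
  obtain j where j: "j < w" "lam j \<le> y - b j" "y - b j \<le> lam (j + 1)"
    using xy(2) by (force simp: mem_staircase)
  define m where "m = n - b k + b j"
  have shift: "(x - b k) - (y - b j) = real_of_int m"
    using xy(3) by (simp add: m_def)
  consider "m = 0" | "m = 1" | "m = -1"
    using pieces_int_shift_bound[OF k(1) j(1) k(2,3) j(2,3) shift] by blast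
  then show ?thesis
  proof cases
    case 1
    then have "k = j \<or> j = k + 1 \<or> k = j + 1"
      using pieces_overlap[OF k(1) j(1) k(2,3)] j(2,3) shift by simp
    moreover have "k \<noteq> j"
      using 1 assms(1) by (auto simp: m_def)
    ultimately consider "j = k + 1" | "k = j + 1" by blast
    then show ?thesis
    proof cases
      case 1
      then have "n = \<bar>b j - b (j - 1)\<bar>"
        using \<open>m = 0\<close> assms(1) by (simp add: m_def)
      then show ?thesis using 1 j(1) by (auto simp: jumps_def)
    next
      case 2
      then have "n = \<bar>b k - b (k - 1)\<bar>"
        using \<open>m = 0\<close> assms(1) by (simp add: m_def)
      then show ?thesis using 2 k(1) by (auto simp: jumps_def)
    qed
  next
    case 2
    then have "k + 1 = w \<and> j = 0"
      using pieces_unit_shift[OF k(1) j(1) k(2,3) j(2,3)] shift by simp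
    then have "n = \<bar>1 + b (w - 1) - b 0\<bar>"
      using 2 assms(1) by (auto simp: m_def)
    then show ?thesis by (simp add: jumps_def)
  next
    case 3
    then have "j + 1 = w \<and> k = 0"
      using pieces_unit_shift[OF j(1) k(1) j(2,3) k(2,3)] shift by simp
    then have "n = \<bar>1 + b (w - 1) - b 0\<bar>"
      using 3 assms(1) by (auto simp: m_def)
    then show ?thesis by (simp add: jumps_def)
  qed
qed

(* Conversely, every jump is realised as a difference of two staircase points:
   the common endpoint lam k of two adjacent pieces, or the two ends of the period. *)
lemma jumps_in_diff_set:
  assumes "n \<in> jumps w b"
  shows "real_of_int n \<in> diff_set (staircase w lam b)"
proof -
  have left_end: "real_of_int (b k) + lam k \<in> staircase w lam b" if "k < w" for k
    using that lam_le[of k "k + 1"] by (auto simp: mem_staircase)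
  have right_end: "real_of_int (b k) + lam (k + 1) \<in> staircase w lam b" if "k < w" for k
    using that lam_le[of k "k + 1"] by (auto simp: mem_staircase)
  consider k where "k \<in> {1..<w}" "n = \<bar>b k - b (k - 1)\<bar>" | "n = \<bar>1 + b (w - 1) - b 0\<bar>"
    using assms by (auto simp: jumps_def)
  then show ?thesis
  proof cases
    case (1 k)
    then have "real_of_int (b k) + lam k \<in> staircase w lam b"
      "real_of_int (b (k - 1)) + lam (k - 1 + 1) \<in> staircase w lam b"
      using left_end right_end[of "k - 1"] by auto
    then have "real_of_int (b k - b (k - 1)) \<in> diff_set (staircase w lam b)"
      using 1 unfolding diff_set_def
      by (intro CollectI exI[of _ "real_of_int (b k) + lam k"]
          exI[of _ "real_of_int (b (k - 1)) + lam (k - 1 + 1)"]) auto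
    then show ?thesis
      using 1 abs_mem_diff_set by fastforce
  next
    case 2
    have "w - 1 < w" "w - 1 + 1 = w"
      using w_pos by auto
    then have "real_of_int (b (w - 1)) + lam (w - 1 + 1) \<in> staircase w lam b"
      "real_of_int (b 0) + lam 0 \<in> staircase w lam b"
      using left_end[of 0] right_end[of "w - 1"] w_pos by presburger+
    then have "real_of_int (1 + b (w - 1) - b 0) \<in> diff_set (staircase w lam b)"
      using w_pos lam_period unfolding diff_set_def
      by (intro CollectI exI[of _ "real_of_int (b (w - 1)) + lam (w - 1 + 1)"]
          exI[of _ "real_of_int (b 0) + lam 0"]) auto
    then show ?thesis
      using 2 abs_mem_diff_set by fastforce
  qed
qed

end

lemma finite_jumps: "finite (jumps w b)"
proof -
  have "{\<bar>b k - b (k - 1)\<bar> | k. k \<in> {1..<w}} = (\<lambda>k. \<bar>b k - b (k - 1)\<bar>) ` {1..<w}"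
    by auto
  then show ?thesis by (simp add: jumps_def)
qed

lemma jumps_pos:
  assumes "\<forall>k\<in>{1..<w}. b (k - 1) \<noteq> b k" "1 + b (w - 1) \<noteq> b 0"
  shows "\<forall>d\<in>jumps w b. d > 0"
  using assms by (auto simp: jumps_def) (metis atLeastLessThan_iff)

lemma dvd_telescope:
  fixes b :: "nat \<Rightarrow> int"
  assumes "\<And>k. 1 \<le> k \<Longrightarrow> k \<le> m \<Longrightarrow> d dvd b k - b (k - 1)"
  shows "d dvd b m - b 0"
  using assms
proof (induction m)
  case 0
  then show ?case by simp
next
  case (Suc m)
  have "d dvd b (Suc m) - b m"
    using Suc.prems[of "Suc m"] by simp
  moreover have "d dvd b m - b 0"
    using Suc by simp
  ultimately have "d dvd (b (Suc m) - b m) + (b m - b 0)"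
    by (rule dvd_add)
  then show ?case by simp
qed

(* The jumps generate 1: the consecutive ones sum to b (w-1) - b 0, and the
   wrap-around jump exceeds this by one. *)
lemma jumps_rel_prime:
  assumes "w > 0"
  shows "rel_prime_set (jumps w b)"
  unfolding rel_prime_set_def
proof (intro conjI allI impI)
  show "jumps w b \<noteq> {}"
    by (simp add: jumps_def)
  fix d :: int
  assume "d > 1"
  show "\<not> (\<forall>s\<in>jumps w b. d dvd s)"
  proof
    assume common: "\<forall>s\<in>jumps w b. d dvd s"
    have step: "d dvd b k - b (k - 1)" if "k \<in> {1..<w}" for k
      using common that by (auto simp: jumps_def)
    have "d dvd 1 + b (w - 1) - b 0"
      using common by (simp add: jumps_def)
    moreover have "d dvd b (w - 1) - b 0"
      using step assms by (intro dvd_telescope) auto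
    ultimately have "d dvd (1 + b (w - 1) - b 0) - (b (w - 1) - b 0)"
      by (rule dvd_diff)
    then show False
      using \<open>d > 1\<close> by simp
  qed
qed

theorem mainTheorem3:
  fixes w :: nat and lam :: "nat \<Rightarrow> real" and b :: "nat \<Rightarrow> int"
    and K' :: "real set"
  assumes "w > 0"
    and "\<forall>k<w. lam k < lam (k + 1)"
    and "lam w = lam 0 + 1"
    and "\<forall>k\<in>{1..<w}. b (k - 1) \<noteq> b k"
    and "1 + b (w - 1) \<noteq> b 0"
    and "K' = (\<Union>k<w. {real_of_int (b k) + lam k .. real_of_int (b k) + lam (k + 1)})"
  shows "N_set K' \<and>
         {n::int. n > 0 \<and> real_of_int n \<in> diff_set K'} =
           {\<bar>b k - b (k - 1)\<bar> | k. k \<in> {1..<w}} \<union> {\<bar>1 + b (w - 1) - b 0\<bar>} \<and>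
         finite ({\<bar>b k - b (k - 1)\<bar> | k. k \<in> {1..<w}} \<union> {\<bar>1 + b (w - 1) - b 0\<bar>}) \<and>
         rel_prime_set ({\<bar>b k - b (k - 1)\<bar> | k. k \<in> {1..<w}} \<union> {\<bar>1 + b (w - 1) - b 0\<bar>}) \<and>
         (\<forall>d\<in>{\<bar>b k - b (k - 1)\<bar> | k. k \<in> {1..<w}} \<union> {\<bar>1 + b (w - 1) - b 0\<bar>}. d > 0)"
proof -
  interpret unit_partition w lam
    using assms(1-3) by unfold_locales
  have K': "K' = staircase w lam b"
    using assms(6) by (simp add: staircase_def)
  have pos: "\<forall>d\<in>jumps w b. d > 0"
    using assms(4,5) by (rule jumps_pos)
  have "{n::int. n > 0 \<and> real_of_int n \<in> diff_set K'} = jumps w b"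
    using staircase_int_diffs jumps_in_diff_set pos unfolding K' by blast
  then show ?thesis
    using staircase_N_set finite_jumps jumps_rel_prime[OF assms(1)] pos
    unfolding K' jumps_def by blast
qed

end
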